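(* Let $N,T\in\mathbb{N}^*$, $\rho>0$, $\alpha\in\mathbb{R}$. Let $W$ be an $N\times N$ random matrix with i.i.d. $\mathcal{N}(0,\rho^2/N^{2\alpha})$ entries, and $B_{T,N}$ its generalised matrix of moments of order $T$. For $l_1,l_2\in\{0,\ldots,T\}$: (i) if $l_1+l_2$ is odd then $B_{T,N}(l_1,l_2)=0$; (ii) if $l_1+l_2$ is even and $\frac{l_1+l_2}2+1\le N$, writing $s=l_1+l_2$, \[ \rho^{s}\frac{N(N-1)\cdots(N-\frac s2)}{N^{\alpha s}}\delta_{l_1,l_2}\le B_{T,N}(l_1,l_2)\le\rho^{s}N^{s(\frac12-\alpha)+1}\delta_{l_1,l_2}+\rho^{s}m_{s}\left(\frac s2\right)^{s}N^{s(\frac12-\alpha)}, \] where $\delta_{l_1,l_2}$ is the Kronecker delta.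
   Context: $m_t:=\mathbb{E}X^t$ for a standard Gaussian $X$. Generalised matrix of moments: for $i\in[N]$, $\beta_{i,0}=1$, $\beta_{i,l}=\sum_{i_1,\ldots,i_l=1}^N W_{ii_1}\cdots W_{i_{l-1}i_l}$ for $l\ge1$, and $B_{T,N}(l_1,l_2)=\mathbb{E}\sum_{i=1}^N\beta_{i,l_1}\beta_{i,l_2}$. *)

theory Defs
  imports "HOL-Probability.Probability"
begin

definition gauss_moment :: "nat \<Rightarrow> real" where
  "gauss_moment t = (\<integral>x. std_normal_density x * x ^ t \<partial>lborel)"

text \<open>beta_{i,l} for an N x N matrix w (indices 0..N-1):
  sum over i_1..i_l in [N] of W_{i i_1} W_{i_1 i_2} ... W_{i_{l-1} i_l};
  the path p : {0..<l} -> [N] encodes (i_1,...,i_l) = (p 0, ..., p (l-1)).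
  For l = 0 this is the empty sum-over-one-path of the empty product, i.e. 1.\<close>
definition beta :: "nat \<Rightarrow> (nat \<times> nat \<Rightarrow> real) \<Rightarrow> nat \<Rightarrow> nat \<Rightarrow> real" where
  "beta N w i l = (\<Sum>p\<in>({..<l} \<rightarrow>\<^sub>E {..<N}).
      \<Prod>k<l. w (if k = 0 then i else p (k - 1), p k))"

definition gen_moment_matrix ::
  "'a measure \<Rightarrow> nat \<Rightarrow> ('a \<Rightarrow> nat \<times> nat \<Rightarrow> real) \<Rightarrow> nat \<Rightarrow> nat \<Rightarrow> real" where
  "gen_moment_matrix M N W l1 l2 =
     (\<integral>\<omega>. (\<Sum>i<N. beta N (W \<omega>) i l1 * beta N (W \<omega>) i l2) \<partial>M)"

end

theory Submission
  imports Defs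
begin

text \<open>
  Expanding both \<open>\<beta>\<close>'s, \<open>B(l\<^sub>1, l\<^sub>2)\<close> is a sum over a root \<open>i\<close>
  and two walks \<open>p\<close>, \<open>q\<close> from \<open>i\<close> of lengths \<open>l\<^sub>1\<close>, \<open>l\<^sub>2\<close> of
  \<open>E \<Prod>\<^sub>e W\<^sub>e^c\<^sub>e\<close>, where \<open>c\<^sub>e\<close> counts the traversals of the edge \<open>e\<close>
  by both walks. By independence this is \<open>\<sigma>^(l\<^sub>1+l\<^sub>2) \<Prod>\<^sub>e m(c\<^sub>e)\<close> with
  \<open>\<sigma> = \<rho> / N^\<alpha>\<close>, which vanishes unless every \<open>c\<^sub>e\<close> is even; in particular
  \<open>B = 0\<close> when \<open>l\<^sub>1 + l\<^sub>2\<close> is odd. With all \<open>c\<^sub>e\<close> even there are at most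
  \<open>(l\<^sub>1+l\<^sub>2)/2\<close> edges, hence at most \<open>(l\<^sub>1+l\<^sub>2)/2 + 1\<close> vertices, and
  equality forces the edges to form a tree which both walks traverse without
  backtracking: \<open>p = q\<close> is self-avoiding and contributes exactly \<open>\<sigma>^(l\<^sub>1+l\<^sub>2)\<close>.
  There are \<open>N(N-1)\<cdots>(N-l\<^sub>1)\<close> such terms, all with \<open>l\<^sub>1 = l\<^sub>2\<close>. Every
  other term uses at most \<open>(l\<^sub>1+l\<^sub>2)/2\<close> vertices, so there are at most
  \<open>((l\<^sub>1+l\<^sub>2)/2)^(l\<^sub>1+l\<^sub>2) N^((l\<^sub>1+l\<^sub>2)/2)\<close> of them, each bounded by
  \<open>\<sigma>^(l\<^sub>1+l\<^sub>2) m(l\<^sub>1+l\<^sub>2)\<close> since \<open>m(a) m(b) \<le> m(a + b)\<close>.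
\<close>

section \<open>Walks and their edge multiplicities\<close>

definition walk_edge :: "nat \<Rightarrow> nat list \<Rightarrow> nat \<Rightarrow> nat \<times> nat" where
  "walk_edge i p t = ((i # p) ! t, p ! t)"

definition edge_mult :: "nat \<Rightarrow> nat list \<Rightarrow> nat \<times> nat \<Rightarrow> nat" where
  "edge_mult i p e = card {t. t < length p \<and> walk_edge i p t = e}"

definition joint_edge_mult :: "nat \<Rightarrow> nat list \<Rightarrow> nat list \<Rightarrow> nat \<times> nat \<Rightarrow> nat" where
  "joint_edge_mult i p q e = edge_mult i p e + edge_mult i q e"

lemma edge_mult_zero_iff: "edge_mult i p e = 0 \<longleftrightarrow> (\<forall>t<length p. walk_edge i p t \<noteq> e)"
  unfolding edge_mult_def by auto

lemma sum_edge_mult: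
  assumes "finite D" "\<And>t. t < length p \<Longrightarrow> walk_edge i p t \<in> D"
  shows "(\<Sum>e\<in>D. edge_mult i p e) = length p"
proof -
  have "(\<Sum>e\<in>D. \<Sum>t\<in>{t \<in> {..<length p}. walk_edge i p t = e}. (1::nat)) = (\<Sum>t<length p. 1)"
    using assms by (intro sum.group) auto
  then show ?thesis
    by (simp add: edge_mult_def)
qed

lemma prod_walk_edge:
  assumes "finite D" "\<And>t. t < length p \<Longrightarrow> walk_edge i p t \<in> D"
  shows "(\<Prod>t<length p. g (walk_edge i p t)) = (\<Prod>e\<in>D. g e ^ edge_mult i p e)"
proof -
  have "(\<Prod>t<length p. g (walk_edge i p t))
      = (\<Prod>e\<in>D. \<Prod>t\<in>{t \<in> {..<length p}. walk_edge i p t = e}. g (walk_edge i p t))"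
    using assms by (intro prod.group[symmetric]) auto
  also have "\<dots> = (\<Prod>e\<in>D. \<Prod>t\<in>{t. t < length p \<and> walk_edge i p t = e}. g e)"
    by (intro prod.cong) auto
  finally show ?thesis
    unfolding edge_mult_def by simp
qed

lemma distinct_walk_if_inj_on_snd:
  assumes start: "i \<notin> snd ` D" and inj: "inj_on snd D"
    and edges: "\<And>t. t < length p \<Longrightarrow> walk_edge i p t \<in> D"
  shows "distinct (i # p)"
proof -
  have "(i # p) ! a \<noteq> (i # p) ! b" if "a < b" "b \<le> length p" for a b
    using that
  proof (induction a arbitrary: b)
    case 0
    then obtain b' where "b = Suc b'" "b' < length p" by (cases b) auto
    with edges[of b'] start show ?case by (force simp: walk_edge_def)
  next
    case (Suc a)
    then obtain b' where b: "b = Suc b'" "b' < length p" "a < b'" by (cases b) auto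
    show ?case
    proof
      assume "(i # p) ! Suc a = (i # p) ! b"
      then have "snd (walk_edge i p a) = snd (walk_edge i p b')"
        using b by (simp add: walk_edge_def)
      moreover have "walk_edge i p a \<in> D" "walk_edge i p b' \<in> D"
        using edges b by auto
      ultimately have "walk_edge i p a = walk_edge i p b'"
        using inj by (meson inj_onD)
      then have "(i # p) ! a = (i # p) ! b'" by (simp add: walk_edge_def)
      with Suc.IH[of b'] b show False by simp
    qed
  qed
  then have "\<forall>a<length (i # p). \<forall>b<length (i # p). a \<noteq> b \<longrightarrow> (i # p) ! a \<noteq> (i # p) ! b"
    by (auto simp del: nth_Cons_Suc elim!: linorder_neqE_nat) (metis less_Suc_eq_le)+
  then show ?thesis
    by (simp only: distinct_conv_nth)
qed

lemma walk_edge_inj: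
  assumes "distinct (i # p)" "a < length p" "b < length p" "walk_edge i p a = walk_edge i p b"
  shows "a = b"
  using assms by (simp add: walk_edge_def nth_eq_iff_index_eq del: nth_Cons_Suc)

lemma edge_mult_le_1:
  assumes "distinct (i # p)"
  shows "edge_mult i p e \<le> 1"
  unfolding edge_mult_def using walk_edge_inj[OF assms]
  by (simp only: One_nat_def, subst card_le_Suc0_iff_eq) auto

definition edge_set :: "nat \<Rightarrow> nat list \<Rightarrow> (nat \<times> nat) set" where
  "edge_set i p = walk_edge i p ` {..<length p}"

lemma snd_edge_set: "snd ` edge_set i p = set p"
  by (auto simp: edge_set_def walk_edge_def image_iff in_set_conv_nth)

lemma edge_mult_pos_iff: "0 < edge_mult i p e \<longleftrightarrow> e \<in> edge_set i p"
  unfolding edge_mult_def edge_set_def by (subst card_gt_0_iff) auto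

lemma walk_edge_covered_by_other_walk:
  assumes even: "\<And>e. even (joint_edge_mult i p q e)"
    and "distinct (i # p)" "distinct (i # q)" "t < length p"
  shows "walk_edge i p t \<in> edge_set i q"
proof -
  let ?e = "walk_edge i p t"
  have "0 < edge_mult i p ?e"
    using edge_mult_pos_iff[of i p ?e] assms(4) by (simp add: edge_set_def)
  then have "edge_mult i p ?e = 1"
    using edge_mult_le_1[OF assms(2), of ?e] by linarith
  with even[of ?e] have "odd (edge_mult i q ?e)"
    by (simp add: joint_edge_mult_def)
  then show ?thesis
    using edge_mult_pos_iff[of i q ?e] by (auto intro: odd_pos)
qed

lemma walk_prefix_of_covering_walk:
  assumes distinct: "distinct (i # q)" and covered: "edge_set i p \<subseteq> edge_set i q"
  shows "t < length p \<Longrightarrow> t < length q \<and> p ! t = q ! t"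
proof (induction t rule: less_induct)
  case (less t)
  obtain r where r: "r < length q" "walk_edge i q r = walk_edge i p t"
    using covered less.prems by (auto simp: edge_set_def)
  have same_start: "(i # p) ! t = (i # q) ! t \<and> t \<le> length q"
    using less.IH[of "t - 1"] less.prems by (cases t) auto
  then have "(i # q) ! r = (i # q) ! t"
    using r(2) by (simp add: walk_edge_def)
  with distinct r(1) same_start have "r = t"
    by (simp add: nth_eq_iff_index_eq del: nth_Cons_Suc)
  with r show ?case by (simp add: walk_edge_def)
qed

text \<open>The conclusion says that every vertex other than the root \<open>i\<close> is entered along
  exactly one edge, i.e. the edges form a tree rooted at \<open>i\<close>.\<close>
lemma tree_edges_if_many_vertices:
  assumes even: "\<And>e. even (joint_edge_mult i p q e)"
    and many: "(length p + length q) div 2 + 1 \<le> card (set (i # p @ q))"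
  defines "D \<equiv> edge_set i p \<union> edge_set i q"
  shows "i \<notin> snd ` D" and "inj_on snd D"
proof -
  have finite: "finite D" by (simp add: D_def edge_set_def)
  have "(\<Sum>e\<in>D. joint_edge_mult i p q e) = length p + length q"
    unfolding joint_edge_mult_def sum.distrib using finite
    by (simp add: sum_edge_mult D_def edge_set_def)
  moreover have "(\<Sum>e\<in>D. 2) \<le> (\<Sum>e\<in>D. joint_edge_mult i p q e)"
  proof (rule sum_mono)
    fix e assume "e \<in> D"
    then have "0 < joint_edge_mult i p q e"
      using edge_mult_pos_iff[of i _ e] by (auto simp: D_def joint_edge_mult_def)
    with even[of e] show "2 \<le> joint_edge_mult i p q e" by presburger
  qed
  ultimately have edges: "2 * card D \<le> length p + length q" by simp
  have vertices: "set (i # p @ q) = insert i (snd ` D)"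
    by (auto simp: D_def image_Un snd_edge_set)
  have image: "card (snd ` D) \<le> card D" using finite by (rule card_image_le)
  show start: "i \<notin> snd ` D"
  proof
    assume "i \<in> snd ` D"
    then have "set (i # p @ q) = snd ` D" using vertices by blast
    with many edges image show False by simp
  qed
  have "card (set (i # p @ q)) = Suc (card (snd ` D))"
    using vertices start finite by simp
  with many edges image have "card (snd ` D) = card D" by simp
  then show "inj_on snd D"
    by (rule eq_card_imp_inj_on[OF finite])
qed

lemma walks_equal_and_simple_if_many_vertices:
  assumes even: "\<And>e. even (joint_edge_mult i p q e)"
    and many: "(length p + length q) div 2 + 1 \<le> card (set (i # p @ q))"
  shows "p = q \<and> distinct (i # p)"
proof -
  note tree = tree_edges_if_many_vertices[OF even many]
  have distinct: "distinct (i # p)" "distinct (i # q)"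
    using distinct_walk_if_inj_on_snd[OF tree] by (auto simp: edge_set_def)
  have even': "\<And>e. even (joint_edge_mult i q p e)"
    using even by (simp add: joint_edge_mult_def add.commute)
  have "edge_set i p \<subseteq> edge_set i q" "edge_set i q \<subseteq> edge_set i p"
    using walk_edge_covered_by_other_walk[OF even distinct]
      walk_edge_covered_by_other_walk[OF even' distinct(2,1)]
    by (auto simp: edge_set_def)
  then have prefix: "t < length p \<Longrightarrow> t < length q \<and> p ! t = q ! t"
    and "t < length q \<Longrightarrow> t < length p" for t
    using walk_prefix_of_covering_walk[OF distinct(2)] walk_prefix_of_covering_walk[OF distinct(1)]
    by blast+
  then have "length p = length q"
    by (meson less_irrefl linorder_neqE_nat)
  with prefix have "p = q"
    by (simp add: nth_equalityI)
  with distinct show ?thesis by simp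
qed

section \<open>Lists taking few values\<close>

definition lists_few_values :: "nat \<Rightarrow> nat \<Rightarrow> nat set \<Rightarrow> nat \<Rightarrow> nat list set" where
  "lists_few_values N k A m = {xs. length xs = m \<and> set xs \<subseteq> {..<N} \<and> card (A \<union> set xs) \<le> k}"

lemma finite_lists_few_values: "finite (lists_few_values N k A m)"
  by (rule finite_subset[OF _ finite_lists_length_eq[of "{..<N}" m]])
    (auto simp: lists_few_values_def)

lemma lists_few_values_Suc:
  "lists_few_values N k A (Suc m) \<subseteq> (\<Union>x<N. (#) x ` lists_few_values N k (insert x A) m)"
  by (auto simp: lists_few_values_def length_Suc_conv image_iff)

lemma lists_few_values_full:
  assumes "finite A" "k \<le> card A" "x \<notin> A"
  shows "lists_few_values N k (insert x A) m = {}"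
proof -
  have "k < card (insert x A \<union> set xs)" for xs
  proof -
    have "k < card (insert x A)" using assms by simp
    also have "\<dots> \<le> card (insert x A \<union> set xs)"
      using assms(1) by (intro card_mono) auto
    finally show ?thesis .
  qed
  then show ?thesis
    by (auto simp: lists_few_values_def not_le)
qed

lemma card_lists_few_values_Suc_le:
  "card (lists_few_values N k A (Suc m)) \<le> (\<Sum>x<N. card (lists_few_values N k (insert x A) m))"
proof -
  have "card (lists_few_values N k A (Suc m)) \<le> card (\<Union>x<N. (#) x ` lists_few_values N k (insert x A) m)"
    by (intro card_mono lists_few_values_Suc) (auto intro: finite_lists_few_values)
  also have "\<dots> \<le> (\<Sum>x<N. card ((#) x ` lists_few_values N k (insert x A) m))"
    by (rule card_UN_le) simp
  also have "\<dots> \<le> (\<Sum>x<N. card (lists_few_values N k (insert x A) m))"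
    by (intro sum_mono card_image_le finite_lists_few_values)
  finally show ?thesis .
qed

text \<open>A new value can be chosen in at most \<open>N\<close> ways and at most \<open>k - card A\<close> times;
  otherwise one of the at most \<open>k\<close> values seen so far is repeated.\<close>
lemma card_lists_few_values_le:
  assumes "finite A" "A \<subseteq> {..<N}" "card A \<le> k" "1 \<le> N"
  shows "real (card (lists_few_values N k A m)) \<le> real k ^ m * real N ^ (k - card A)"
  using assms(1-3)
proof (induction m arbitrary: A)
  case 0
  have "card (lists_few_values N k A 0) \<le> card {[] :: nat list}"
    by (rule card_mono) (auto simp: lists_few_values_def)
  then have "real (card (lists_few_values N k A 0)) \<le> 1"
    by simp
  also have "1 \<le> real N ^ (k - card A)"
    using assms(4) by simp
  finally show ?case by simp
next
  case (Suc m)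
  define a where "a = card A"
  define c where "c x = real (card (lists_few_values N k (insert x A) m))" for x
  have "real (card (lists_few_values N k A (Suc m))) \<le> (\<Sum>x<N. c x)"
    unfolding c_def of_nat_sum[symmetric] of_nat_le_iff by (rule card_lists_few_values_Suc_le)
  also have "\<dots> = (\<Sum>x\<in>A. c x) + (\<Sum>x\<in>{..<N} - A. c x)"
    using Suc.prems sum.subset_diff[of A "{..<N}" c] by (simp add: add.commute)
  finally have "real (card (lists_few_values N k A (Suc m))) \<le> (\<Sum>x\<in>A. c x) + (\<Sum>x\<in>{..<N} - A. c x)" .
  moreover have "(\<Sum>x\<in>A. c x) \<le> real a * (real k ^ m * real N ^ (k - a))"
    using sum_mono[of A c "\<lambda>_. real k ^ m * real N ^ (k - a)"] Suc.IH[of A] Suc.prems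
    by (simp add: c_def a_def insert_absorb)
  moreover have "(\<Sum>x\<in>{..<N} - A. c x) \<le> (if a < k then real k ^ m * real N ^ (k - a) else 0)"
  proof (cases "a < k")
    case True
    have "c x \<le> real k ^ m * real N ^ (k - Suc a)" if "x \<in> {..<N} - A" for x
      using Suc.IH[of "insert x A"] Suc.prems that True by (simp add: c_def a_def)
    then have "(\<Sum>x\<in>{..<N} - A. c x) \<le> real (card ({..<N} - A)) * (real k ^ m * real N ^ (k - Suc a))"
      using sum_mono[of "{..<N} - A" c "\<lambda>_. real k ^ m * real N ^ (k - Suc a)"] by simp
    also have "\<dots> \<le> real N * (real k ^ m * real N ^ (k - Suc a))"
      by (intro mult_right_mono) (auto simp: card_Diff_subset Suc.prems)
    also have "\<dots> = real k ^ m * real N ^ (k - a)"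
      using True by (simp add: Suc_diff_Suc flip: power_Suc)
    finally show ?thesis using True by simp
  next
    case False
    then show ?thesis
      using lists_few_values_full[of A k] Suc.prems by (simp add: c_def a_def)
  qed
  ultimately have "real (card (lists_few_values N k A (Suc m)))
      \<le> real (if a < k then Suc a else a) * (real k ^ m * real N ^ (k - a))"
    by (cases "a < k") (auto simp: algebra_simps)
  also have "\<dots> \<le> real k * (real k ^ m * real N ^ (k - a))"
    using Suc.prems by (intro mult_right_mono) (auto simp: a_def)
  finally show ?case by (simp add: a_def)
qed

section \<open>Moments of the standard Gaussian\<close>

lemma gauss_moment_eq:
  "gauss_moment n = (if even n then fact n / (2 ^ (n div 2) * fact (n div 2)) else 0)"
proof (cases "even n")
  case True
  then obtain k where "n = 2 * k" by blast
  then show ?thesis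
    using integral_std_normal_moment_even[of k] by (simp add: gauss_moment_def)
next
  case False
  then obtain k where "n = 2 * k + 1" using oddE by blast
  then show ?thesis
    using integral_std_normal_moment_odd[of k] by (simp add: gauss_moment_def)
qed

lemma gauss_moment_nonneg: "0 \<le> gauss_moment n"
  by (simp add: gauss_moment_eq)

lemma gauss_moment_odd: "odd n \<Longrightarrow> gauss_moment n = 0"
  by (simp add: gauss_moment_eq)

lemma gauss_moment_0 [simp]: "gauss_moment 0 = 1"
  and gauss_moment_2 [simp]: "gauss_moment 2 = 1"
  by (simp_all add: gauss_moment_eq)

lemma gauss_moment_Suc_Suc: "gauss_moment (Suc (Suc n)) = real (Suc n) * gauss_moment n"
proof (cases "even n")
  case True
  then obtain k where k: "n = 2 * k" by blast
  have "fact (2 * Suc k) = (2 * real (Suc k) * real (2 * k + 1)) * (fact (2 * k) :: real)"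
    by (simp add: fact_Suc algebra_simps)
  moreover have "fact (Suc k) = real (Suc k) * (fact k :: real)"
    by (simp add: fact_Suc)
  ultimately show ?thesis
    using k by (simp add: gauss_moment_eq del: of_nat_Suc of_nat_add)
next
  case False
  then show ?thesis by (simp add: gauss_moment_eq)
qed

lemma gauss_moment_mult_le: "gauss_moment a * gauss_moment b \<le> gauss_moment (a + b)"
proof (cases "even b")
  case True
  then obtain k where "b = 2 * k" by blast
  moreover have "gauss_moment a * gauss_moment (2 * k) \<le> gauss_moment (a + 2 * k)"
  proof (induction k)
    case (Suc k)
    have "gauss_moment a * gauss_moment (2 * Suc k) = real (Suc (2 * k)) * (gauss_moment a * gauss_moment (2 * k))"
      using gauss_moment_Suc_Suc[of "2 * k"] by (simp add: ac_simps)
    also have "\<dots> \<le> real (Suc (a + 2 * k)) * gauss_moment (a + 2 * k)"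
      using Suc.IH gauss_moment_nonneg by (intro mult_mono) auto
    also have "\<dots> = gauss_moment (a + 2 * Suc k)"
      using gauss_moment_Suc_Suc[of "a + 2 * k"] by simp
    finally show ?case .
  qed simp
  ultimately show ?thesis by simp
next
  case False
  then show ?thesis by (simp add: gauss_moment_odd gauss_moment_nonneg)
qed

lemma gauss_moment_prod_le:
  "finite S \<Longrightarrow> (\<Prod>e\<in>S. gauss_moment (c e)) \<le> gauss_moment (\<Sum>e\<in>S. c e)"
proof (induction S rule: finite_induct)
  case (insert x S)
  then have "(\<Prod>e\<in>insert x S. gauss_moment (c e)) \<le> gauss_moment (c x) * gauss_moment (\<Sum>e\<in>S. c e)"
    by (simp add: mult_left_mono gauss_moment_nonneg)
  also have "\<dots> \<le> gauss_moment (\<Sum>e\<in>insert x S. c e)"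
    using insert gauss_moment_mult_le by simp
  finally show ?case .
qed simp

lemma integral_normal_density_mult_power:
  assumes "0 < \<sigma>"
  shows "(\<integral>x. normal_density 0 \<sigma> x * x ^ n \<partial>lborel) = \<sigma> ^ n * gauss_moment n"
proof (cases "even n")
  case True
  then obtain k where k: "n = 2 * k" by blast
  then show ?thesis
    using integral_normal_moment_even[OF assms, of 0 k] assms
    by (simp add: gauss_moment_eq field_simps flip: power_mult)
next
  case False
  then obtain k where "n = 2 * k + 1" using oddE by blast
  then show ?thesis
    using integral_normal_moment_odd[OF assms, of 0 k] by (simp add: gauss_moment_eq)
qed

section \<open>Weighted sums over rooted pairs of paths\<close>

definition paths :: "nat \<Rightarrow> nat \<Rightarrow> nat list set" where
  "paths N l = {p. set p \<subseteq> {..<N} \<and> length p = l}"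

definition rooted_path_pairs :: "nat \<Rightarrow> nat \<Rightarrow> nat \<Rightarrow> (nat \<times> nat list \<times> nat list) set" where
  "rooted_path_pairs N l1 l2 = {..<N} \<times> paths N l1 \<times> paths N l2"

definition path_pair_weight :: "nat \<Rightarrow> nat \<Rightarrow> nat list \<Rightarrow> nat list \<Rightarrow> real" where
  "path_pair_weight N i p q = (\<Prod>e\<in>{..<N} \<times> {..<N}. gauss_moment (joint_edge_mult i p q e))"

definition weight_sum :: "nat \<Rightarrow> nat \<Rightarrow> nat \<Rightarrow> real" where
  "weight_sum N l1 l2 = (\<Sum>(i, p, q)\<in>rooted_path_pairs N l1 l2. path_pair_weight N i p q)"

definition simple_path_pairs :: "nat \<Rightarrow> nat \<Rightarrow> nat \<Rightarrow> (nat \<times> nat list \<times> nat list) set" where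
  "simple_path_pairs N l1 l2 =
     {(i, p, q). (i, p, q) \<in> rooted_path_pairs N l1 l2 \<and> p = q \<and> distinct (i # p)}"

definition few_vertex_path_pairs :: "nat \<Rightarrow> nat \<Rightarrow> nat \<Rightarrow> (nat \<times> nat list \<times> nat list) set" where
  "few_vertex_path_pairs N l1 l2 =
     {(i, p, q). (i, p, q) \<in> rooted_path_pairs N l1 l2 \<and> card (set (i # p @ q)) \<le> (l1 + l2) div 2}"

lemma finite_paths: "finite (paths N l)"
  unfolding paths_def by (rule finite_lists_length_eq) simp

lemma finite_rooted_path_pairs: "finite (rooted_path_pairs N l1 l2)"
  by (simp add: rooted_path_pairs_def finite_paths)

lemma mem_rooted_path_pairs:
  "(i, p, q) \<in> rooted_path_pairs N l1 l2 \<longleftrightarrow>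
     i < N \<and> set p \<subseteq> {..<N} \<and> set q \<subseteq> {..<N} \<and> length p = l1 \<and> length q = l2"
  by (auto simp: rooted_path_pairs_def paths_def)

lemma walk_edge_in_square:
  "i < N \<Longrightarrow> set p \<subseteq> {..<N} \<Longrightarrow> t < length p \<Longrightarrow> walk_edge i p t \<in> {..<N} \<times> {..<N}"
  unfolding walk_edge_def using nth_mem[of t p] nth_mem[of t "i # p"] by (auto simp del: nth_mem)

lemma sum_joint_edge_mult:
  assumes "i < N" "set p \<subseteq> {..<N}" "set q \<subseteq> {..<N}"
  shows "(\<Sum>e\<in>{..<N} \<times> {..<N}. joint_edge_mult i p q e) = length p + length q"
  using assms by (simp add: joint_edge_mult_def sum.distrib sum_edge_mult walk_edge_in_square)

lemma path_pair_weight_nonneg: "0 \<le> path_pair_weight N i p q"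
  unfolding path_pair_weight_def by (intro prod_nonneg gauss_moment_nonneg)

lemma path_pair_weight_le:
  assumes "i < N" "set p \<subseteq> {..<N}" "set q \<subseteq> {..<N}"
  shows "path_pair_weight N i p q \<le> gauss_moment (length p + length q)"
  unfolding path_pair_weight_def
  using gauss_moment_prod_le[of "{..<N} \<times> {..<N}" "joint_edge_mult i p q"] sum_joint_edge_mult[OF assms]
  by simp

lemma even_joint_edge_mult_if_weight_nonzero:
  assumes "i < N" "set p \<subseteq> {..<N}" "set q \<subseteq> {..<N}" "path_pair_weight N i p q \<noteq> 0"
  shows "even (joint_edge_mult i p q e)"
proof (cases "e \<in> {..<N} \<times> {..<N}")
  case True
  then show ?thesis
    using assms(4) gauss_moment_odd unfolding path_pair_weight_def by fastforce
next
  case False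
  then have "edge_mult i p e = 0" "edge_mult i q e = 0"
    using walk_edge_in_square[OF assms(1)] assms(2,3) by (auto simp: edge_mult_zero_iff)
  then show ?thesis by (simp add: joint_edge_mult_def)
qed

lemma path_pair_weight_odd:
  assumes "i < N" "set p \<subseteq> {..<N}" "set q \<subseteq> {..<N}" "odd (length p + length q)"
  shows "path_pair_weight N i p q = 0"
proof (rule ccontr)
  assume "path_pair_weight N i p q \<noteq> 0"
  then have "even (\<Sum>e\<in>{..<N} \<times> {..<N}. joint_edge_mult i p q e)"
    using even_joint_edge_mult_if_weight_nonzero[OF assms(1-3)] by (intro dvd_sum) auto
  with sum_joint_edge_mult[OF assms(1-3)] assms(4) show False by simp
qed

lemma path_pair_weight_simple:
  assumes "distinct (i # p)"
  shows "path_pair_weight N i p p = 1"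
proof -
  have "joint_edge_mult i p p e = 0 \<or> joint_edge_mult i p p e = 2" for e
    using edge_mult_le_1[OF assms, of e] by (auto simp: joint_edge_mult_def)
  then have "gauss_moment (joint_edge_mult i p p e) = 1" for e
    by (metis gauss_moment_0 gauss_moment_2)
  then show ?thesis
    by (simp add: path_pair_weight_def)
qed

lemma real_prod_atLeastAtMost_minus:
  assumes "l \<le> N"
  shows "real (\<Prod>{N - l..N}) = (\<Prod>k\<in>{0..l}. real N - real k)"
proof -
  have "(\<Prod>{N - l..N}) = (\<Prod>k\<in>{0..l}. N - k)"
    by (rule prod.reindex_bij_witness[where i = "\<lambda>k. N - k" and j = "\<lambda>k. N - k"])
      (use assms in auto)
  then show ?thesis
    using assms by (simp add: of_nat_prod of_nat_diff)
qed

lemma card_simple_path_pairs: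
  assumes "l + 1 \<le> N"
  shows "real (card (simple_path_pairs N l l)) = (\<Prod>k\<in>{0..l}. real N - real k)"
proof -
  have "bij_betw (\<lambda>(i, p, q). i # p) (simple_path_pairs N l l)
      {ys. length ys = Suc l \<and> distinct ys \<and> set ys \<subseteq> {..<N}}"
    by (rule bij_betwI[where g = "\<lambda>ys. (hd ys, tl ys, tl ys)"])
      (auto simp: simple_path_pairs_def mem_rooted_path_pairs length_Suc_conv)
  then have "card (simple_path_pairs N l l) = \<Prod>{N - l..N}"
    using card_lists_distinct_length_eq[of "{..<N}" "Suc l"] assms
    by (simp add: bij_betw_same_card Suc_diff_Suc)
  then show ?thesis
    using real_prod_atLeastAtMost_minus[of l N] assms by simp
qed

lemma simple_path_pairs_empty: "l1 \<noteq> l2 \<Longrightarrow> simple_path_pairs N l1 l2 = {}"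
  by (auto simp: simple_path_pairs_def mem_rooted_path_pairs)

text \<open>A path pair on at most \<open>k = (l1 + l2) / 2\<close> vertices is a root together with a word
  of length \<open>l1 + l2\<close> which, with the root, takes at most \<open>k\<close> values.\<close>
lemma card_few_vertex_path_pairs_le:
  fixes N l1 l2 :: nat
  assumes "1 \<le> N"
  defines "k \<equiv> (l1 + l2) div 2"
  shows "real (card (few_vertex_path_pairs N l1 l2)) \<le> real k ^ (l1 + l2) * real N ^ k"
proof (cases "k = 0")
  case True
  then have "few_vertex_path_pairs N l1 l2 = {}"
    by (auto simp: few_vertex_path_pairs_def k_def card_0_eq)
  then show ?thesis by simp
next
  case False
  define S where "S = (SIGMA i:{..<N}. lists_few_values N k {i} (l1 + l2))"
  have "few_vertex_path_pairs N l1 l2 \<subseteq> (\<lambda>(i, ys). (i, take l1 ys, drop l1 ys)) ` S"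
  proof
    fix x assume "x \<in> few_vertex_path_pairs N l1 l2"
    then obtain i p q where x: "x = (i, p, q)" "(i, p, q) \<in> rooted_path_pairs N l1 l2"
      "card (set (i # p @ q)) \<le> k"
      by (auto simp: few_vertex_path_pairs_def k_def)
    then have "(i, p @ q) \<in> S" "x = (\<lambda>(i, ys). (i, take l1 ys, drop l1 ys)) (i, p @ q)"
      by (auto simp: S_def lists_few_values_def mem_rooted_path_pairs)
    then show "x \<in> (\<lambda>(i, ys). (i, take l1 ys, drop l1 ys)) ` S"
      by blast
  qed
  moreover have "finite S"
    by (simp add: S_def finite_lists_few_values)
  ultimately have "card (few_vertex_path_pairs N l1 l2) \<le> card S"
    by (meson card_image_le card_mono finite_imageI order_trans)
  also have "card S = (\<Sum>i<N. card (lists_few_values N k {i} (l1 + l2)))"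
    by (simp add: S_def card_SigmaI finite_lists_few_values)
  finally have "real (card (few_vertex_path_pairs N l1 l2))
      \<le> (\<Sum>i<N. real (card (lists_few_values N k {i} (l1 + l2))))"
    by (simp flip: of_nat_sum)
  also have "\<dots> \<le> (\<Sum>i<N. real k ^ (l1 + l2) * real N ^ (k - 1))"
    using False assms card_lists_few_values_le[of "{i}" N k "l1 + l2" for i]
    by (intro sum_mono) auto
  also have "\<dots> = real k ^ (l1 + l2) * real N ^ k"
    using False by (simp add: power_eq_if)
  finally show ?thesis .
qed

lemma sum_path_pair_weight_simple:
  "(\<Sum>(i, p, q)\<in>simple_path_pairs N l1 l2. path_pair_weight N i p q) = card (simple_path_pairs N l1 l2)"
proof -
  have "(\<Sum>(i, p, q)\<in>simple_path_pairs N l1 l2. path_pair_weight N i p q)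
      = (\<Sum>x\<in>simple_path_pairs N l1 l2. 1)"
    by (intro sum.cong) (auto simp: simple_path_pairs_def path_pair_weight_simple)
  then show ?thesis by simp
qed

lemma weight_sum_nonneg: "0 \<le> weight_sum N l1 l2"
  unfolding weight_sum_def by (intro sum_nonneg) (auto simp: path_pair_weight_nonneg)

lemma weight_sum_odd: "odd (l1 + l2) \<Longrightarrow> weight_sum N l1 l2 = 0"
  unfolding weight_sum_def
  by (intro sum.neutral) (auto simp: mem_rooted_path_pairs intro!: path_pair_weight_odd)

lemma weight_sum_ge:
  assumes "l + 1 \<le> N"
  shows "(\<Prod>k\<in>{0..l}. real N - real k) \<le> weight_sum N l l"
proof -
  have "(\<Sum>(i, p, q)\<in>simple_path_pairs N l l. path_pair_weight N i p q) \<le> weight_sum N l l"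
    unfolding weight_sum_def
    by (intro sum_mono2 finite_rooted_path_pairs)
      (auto simp: simple_path_pairs_def path_pair_weight_nonneg)
  then show ?thesis
    using card_simple_path_pairs[OF assms] by (simp add: sum_path_pair_weight_simple)
qed

lemma path_pair_weight_le_if_not_simple:
  assumes "(i, p, q) \<in> rooted_path_pairs N l1 l2" "(i, p, q) \<notin> simple_path_pairs N l1 l2"
  shows "path_pair_weight N i p q
    \<le> (if (i, p, q) \<in> few_vertex_path_pairs N l1 l2 then gauss_moment (l1 + l2) else 0)"
proof (cases "path_pair_weight N i p q = 0")
  case True
  then show ?thesis by (simp add: gauss_moment_nonneg)
next
  case False
  have mem: "i < N" "set p \<subseteq> {..<N}" "set q \<subseteq> {..<N}" "length p = l1" "length q = l2"
    using assms(1) by (simp_all add: mem_rooted_path_pairs)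
  have "(i, p, q) \<in> few_vertex_path_pairs N l1 l2"
  proof (rule ccontr)
    assume "(i, p, q) \<notin> few_vertex_path_pairs N l1 l2"
    then have "(length p + length q) div 2 + 1 \<le> card (set (i # p @ q))"
      using assms(1) mem by (auto simp: few_vertex_path_pairs_def)
    with even_joint_edge_mult_if_weight_nonzero[OF mem(1-3) False]
    have "p = q \<and> distinct (i # p)"
      by (rule walks_equal_and_simple_if_many_vertices)
    with assms show False by (auto simp: simple_path_pairs_def)
  qed
  then show ?thesis
    using path_pair_weight_le[OF mem(1-3)] mem by simp
qed

lemma weight_sum_le:
  "weight_sum N l1 l2 \<le> real (card (simple_path_pairs N l1 l2))
     + gauss_moment (l1 + l2) * real (card (few_vertex_path_pairs N l1 l2))"
proof -
  let ?w = "\<lambda>(i, p, q). path_pair_weight N i p q"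
  let ?R = "rooted_path_pairs N l1 l2"
  let ?S = "simple_path_pairs N l1 l2"
  let ?F = "few_vertex_path_pairs N l1 l2"
  let ?g = "\<lambda>x. if x \<in> ?F then gauss_moment (l1 + l2) else 0"
  have "?S \<subseteq> ?R" "?F \<subseteq> ?R"
    by (auto simp: simple_path_pairs_def few_vertex_path_pairs_def)
  have "weight_sum N l1 l2 = sum ?w ?S + sum ?w (?R - ?S)"
    unfolding weight_sum_def using \<open>?S \<subseteq> ?R\<close>
    by (simp add: sum.subset_diff[OF _ finite_rooted_path_pairs])
  also have "sum ?w ?S = card ?S"
    by (rule sum_path_pair_weight_simple)
  also have "sum ?w (?R - ?S) \<le> sum ?g (?R - ?S)"
  proof (rule sum_mono)
    fix x assume x: "x \<in> ?R - ?S"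
    obtain i p q where "x = (i, p, q)" by (cases x)
    with x show "?w x \<le> ?g x"
      using path_pair_weight_le_if_not_simple[of i p q N l1 l2] by simp
  qed
  also have "\<dots> \<le> sum ?g ?R"
    by (intro sum_mono2 finite_rooted_path_pairs) (auto simp: gauss_moment_nonneg)
  also have "\<dots> = gauss_moment (l1 + l2) * card ?F"
    using \<open>?F \<subseteq> ?R\<close> by (simp add: sum.If_cases[OF finite_rooted_path_pairs] Int_absorb1)
  finally show ?thesis by simp
qed

lemma weight_sum_bounds:
  assumes "l1 + l2 = 2 * k" "k + 1 \<le> N"
  defines "\<delta> \<equiv> (if l1 = l2 then 1 else 0 :: real)"
  shows "(\<Prod>j\<in>{0..k}. real N - real j) * \<delta> \<le> weight_sum N l1 l2"
    and "weight_sum N l1 l2 \<le> real N ^ (k + 1) * \<delta> + gauss_moment (2 * k) * real k ^ (2 * k) * real N ^ k"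
proof -
  show "(\<Prod>j\<in>{0..k}. real N - real j) * \<delta> \<le> weight_sum N l1 l2"
  proof (cases "l1 = l2")
    case True
    then have "l1 = k" "l2 = k" using assms(1) by auto
    then show ?thesis using weight_sum_ge[of k N] assms(2) by (simp add: \<delta>_def)
  next
    case False
    then show ?thesis using weight_sum_nonneg[of N l1 l2] by (simp add: \<delta>_def)
  qed
  have "real (card (simple_path_pairs N l1 l2)) \<le> real N ^ (k + 1) * \<delta>"
  proof (cases "l1 = l2")
    case True
    have "(\<Prod>j\<in>{0..k}. real N - real j) \<le> (\<Prod>j\<in>{0..k}. real N)"
      using assms(2) by (intro prod_mono) auto
    moreover have "l1 = k" "l2 = k" using True assms(1) by auto
    ultimately show ?thesis
      using assms(2) card_simple_path_pairs[of k N] by (simp add: \<delta>_def)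
  next
    case False
    then show ?thesis by (simp add: simple_path_pairs_empty \<delta>_def)
  qed
  moreover have "gauss_moment (2 * k) * real (card (few_vertex_path_pairs N l1 l2))
      \<le> gauss_moment (2 * k) * (real k ^ (2 * k) * real N ^ k)"
    using assms card_few_vertex_path_pairs_le[of N l1 l2]
    by (intro mult_left_mono gauss_moment_nonneg) auto
  ultimately show "weight_sum N l1 l2 \<le> real N ^ (k + 1) * \<delta> + gauss_moment (2 * k) * real k ^ (2 * k) * real N ^ k"
    using weight_sum_le[of N l1 l2] assms(1) by (simp add: mult.assoc)
qed

section \<open>Expansion of the generalised matrix of moments\<close>

lemma bij_betw_nth_paths_PiE:
  "bij_betw (\<lambda>p t. if t < l then p ! t else undefined) (paths N l) ({..<l} \<rightarrow>\<^sub>E {..<N})"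
proof (rule bij_betwI[where g = "\<lambda>f. map f [0..<l]"])
  show "(\<lambda>p t. if t < l then p ! t else undefined) \<in> paths N l \<rightarrow> {..<l} \<rightarrow>\<^sub>E {..<N}"
  proof
    fix p assume p: "p \<in> paths N l"
    show "(\<lambda>t. if t < l then p ! t else undefined) \<in> {..<l} \<rightarrow>\<^sub>E {..<N}"
    proof (rule PiE_I)
      fix t assume "t \<in> {..<l}"
      then show "(if t < l then p ! t else undefined) \<in> {..<N}"
        using p nth_mem[of t p] by (auto simp: paths_def simp del: nth_mem)
    qed simp
  qed
  show "(\<lambda>f. map f [0..<l]) \<in> ({..<l} \<rightarrow>\<^sub>E {..<N}) \<rightarrow> paths N l"
  proof
    fix f assume "f \<in> {..<l} \<rightarrow>\<^sub>E {..<N}"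
    then show "map f [0..<l] \<in> paths N l"
      using PiE_mem[of f "{..<l}" "\<lambda>_. {..<N}"] by (auto simp: paths_def)
  qed
  show "map (\<lambda>t. if t < l then p ! t else undefined) [0..<l] = p" if "p \<in> paths N l" for p
    using that by (intro nth_equalityI) (auto simp: paths_def)
  show "(\<lambda>t. if t < l then map f [0..<l] ! t else undefined) = f" if f: "f \<in> {..<l} \<rightarrow>\<^sub>E {..<N}" for f
  proof
    fix t
    show "(if t < l then map f [0..<l] ! t else undefined) = f t"
      using PiE_arb[OF f, of t] by simp
  qed
qed

lemma beta_eq_sum_paths: "beta N w i l = (\<Sum>p\<in>paths N l. \<Prod>t<l. w (walk_edge i p t))"
proof -
  let ?f = "\<lambda>p t. if t < l then p ! t else undefined"
  have "beta N w i l = (\<Sum>p\<in>paths N l. \<Prod>t<l. w (if t = 0 then i else ?f p (t - 1), ?f p t))"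
    unfolding beta_def by (rule sum.reindex_bij_betw[OF bij_betw_nth_paths_PiE, symmetric])
  also have "\<dots> = (\<Sum>p\<in>paths N l. \<Prod>t<l. w (walk_edge i p t))"
    by (intro sum.cong prod.cong refl) (auto simp: walk_edge_def nth_Cons')
  finally show ?thesis .
qed

lemma sum_beta_mult_eq:
  "(\<Sum>i<N. beta N w i l1 * beta N w i l2) =
     (\<Sum>(i, p, q)\<in>rooted_path_pairs N l1 l2. (\<Prod>t<l1. w (walk_edge i p t)) * (\<Prod>t<l2. w (walk_edge i q t)))"
  by (simp add: beta_eq_sum_paths rooted_path_pairs_def sum_product sum.cartesian_product)

context prob_space
begin

lemma integral_path_pair_product:
  fixes W :: "'a \<Rightarrow> nat \<times> nat \<Rightarrow> real"
  assumes indep: "indep_vars (\<lambda>_. borel) (\<lambda>e \<omega>. W \<omega> e) ({..<N} \<times> {..<N})"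
    and gauss: "\<And>i j. i < N \<Longrightarrow> j < N \<Longrightarrow> distributed M lborel (\<lambda>\<omega>. W \<omega> (i, j)) (normal_density 0 \<sigma>)"
    and "0 < \<sigma>" and "i < N" "set p \<subseteq> {..<N}" "set q \<subseteq> {..<N}"
  defines "X \<equiv> \<lambda>\<omega>. (\<Prod>t<length p. W \<omega> (walk_edge i p t)) * (\<Prod>t<length q. W \<omega> (walk_edge i q t))"
  shows "integrable M X" and "(\<integral>\<omega>. X \<omega> \<partial>M) = \<sigma> ^ (length p + length q) * path_pair_weight N i p q"
proof -
  let ?S = "{..<N} \<times> {..<N}"
  let ?c = "joint_edge_mult i p q"
  have X: "X = (\<lambda>\<omega>. \<Prod>e\<in>?S. W \<omega> e ^ ?c e)"
    using assms(4-6)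
    by (simp add: X_def fun_eq_iff prod_walk_edge[of ?S] walk_edge_in_square joint_edge_mult_def
        power_add prod.distrib)
  have indep_powers: "indep_vars (\<lambda>_. borel) (\<lambda>e \<omega>. W \<omega> e ^ ?c e) ?S"
    using indep_vars_compose2[OF indep, of "\<lambda>e x. x ^ ?c e" "\<lambda>_. borel"] by simp
  have moment: "integrable M (\<lambda>\<omega>. W \<omega> e ^ ?c e) \<and> (\<integral>\<omega>. W \<omega> e ^ ?c e \<partial>M) = \<sigma> ^ ?c e * gauss_moment (?c e)"
    if edge: "e \<in> ?S" for e
  proof -
    obtain a b where e: "e = (a, b)" "a < N" "b < N"
      using edge by blast
    have "integrable lborel (\<lambda>x. normal_density 0 \<sigma> x * x ^ ?c e)"
      using integrable_normal_moment[OF \<open>0 < \<sigma>\<close>, of 0 "?c e"] by simp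
    then show ?thesis
      using distributed_integrable[OF gauss[OF e(2,3)], of "\<lambda>x. x ^ ?c e"]
        distributed_integral[OF gauss[OF e(2,3)], of "\<lambda>x. x ^ ?c e"]
        integral_normal_density_mult_power[OF \<open>0 < \<sigma>\<close>] e
      by simp
  qed
  show "integrable M X"
    unfolding X using moment by (intro indep_vars_integrable[OF _ indep_powers]) auto
  have "(\<integral>\<omega>. X \<omega> \<partial>M) = (\<Prod>e\<in>?S. \<integral>\<omega>. W \<omega> e ^ ?c e \<partial>M)"
    unfolding X using moment by (intro indep_vars_lebesgue_integral[OF _ indep_powers]) auto
  also have "\<dots> = (\<Prod>e\<in>?S. \<sigma> ^ ?c e * gauss_moment (?c e))"
    using moment by (intro prod.cong) auto
  also have "\<dots> = \<sigma> ^ (\<Sum>e\<in>?S. ?c e) * path_pair_weight N i p q"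
    by (simp add: path_pair_weight_def prod.distrib power_sum)
  finally show "(\<integral>\<omega>. X \<omega> \<partial>M) = \<sigma> ^ (length p + length q) * path_pair_weight N i p q"
    using sum_joint_edge_mult[OF assms(4-6)] by simp
qed

lemma gen_moment_matrix_eq_weight_sum:
  fixes W :: "'a \<Rightarrow> nat \<times> nat \<Rightarrow> real"
  assumes indep: "indep_vars (\<lambda>_. borel) (\<lambda>e \<omega>. W \<omega> e) ({..<N} \<times> {..<N})"
    and gauss: "\<And>i j. i < N \<Longrightarrow> j < N \<Longrightarrow> distributed M lborel (\<lambda>\<omega>. W \<omega> (i, j)) (normal_density 0 \<sigma>)"
    and "0 < \<sigma>"
  shows "gen_moment_matrix M N W l1 l2 = \<sigma> ^ (l1 + l2) * weight_sum N l1 l2"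
proof -
  define X where "X = (\<lambda>(i, p, q) \<omega>. (\<Prod>t<l1. W \<omega> (walk_edge i p t)) * (\<Prod>t<l2. W \<omega> (walk_edge i q t)))"
  have X: "integrable M (X x) \<and> (\<integral>\<omega>. X x \<omega> \<partial>M) = \<sigma> ^ (l1 + l2) * (\<lambda>(i, p, q). path_pair_weight N i p q) x"
    if "x \<in> rooted_path_pairs N l1 l2" for x
    using that integral_path_pair_product[OF indep gauss \<open>0 < \<sigma>\<close>]
    by (cases x) (auto simp: X_def mem_rooted_path_pairs)
  have "gen_moment_matrix M N W l1 l2 = (\<integral>\<omega>. (\<Sum>x\<in>rooted_path_pairs N l1 l2. X x \<omega>) \<partial>M)"
    unfolding gen_moment_matrix_def sum_beta_mult_eq X_def by (simp add: case_prod_unfold)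
  also have "\<dots> = (\<Sum>x\<in>rooted_path_pairs N l1 l2. \<integral>\<omega>. X x \<omega> \<partial>M)"
    using X by (intro Bochner_Integration.integral_sum) auto
  also have "\<dots> = \<sigma> ^ (l1 + l2) * weight_sum N l1 l2"
    using X by (simp add: weight_sum_def sum_distrib_left)
  finally show ?thesis .
qed

end

lemma power_divide_powr: "0 < x \<Longrightarrow> x ^ n / x powr a = x powr (real n - a)"
  by (simp add: powr_diff powr_realpow)

lemma gen_moment_matrix_gaussian:
  fixes W :: "'a \<Rightarrow> nat \<times> nat \<Rightarrow> real"
  assumes "prob_space M" "1 \<le> N" "0 < \<rho>"
    and "prob_space.indep_vars M (\<lambda>_. borel) (\<lambda>e \<omega>. W \<omega> e) ({..<N} \<times> {..<N})"
    and "\<And>i j. i < N \<Longrightarrow> j < N \<Longrightarrow>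
        distributed M lborel (\<lambda>\<omega>. W \<omega> (i, j)) (normal_density 0 (\<rho> / real N powr \<alpha>))"
  shows "gen_moment_matrix M N W l1 l2 = \<rho> ^ (l1 + l2) / real N powr (\<alpha> * real (l1 + l2)) * weight_sum N l1 l2"
proof -
  have "0 < \<rho> / real N powr \<alpha>" using assms(2,3) by simp
  with assms show ?thesis
    using prob_space.gen_moment_matrix_eq_weight_sum[OF assms(1,4,5)]
    by (simp add: power_divide powr_power mult.commute)
qed

lemma gen_moment_matrix_even_bounds:
  fixes W :: "'a \<Rightarrow> nat \<times> nat \<Rightarrow> real"
  assumes "prob_space M" "1 \<le> N" "0 < \<rho>"
    and "prob_space.indep_vars M (\<lambda>_. borel) (\<lambda>e \<omega>. W \<omega> e) ({..<N} \<times> {..<N})"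
    and "\<And>i j. i < N \<Longrightarrow> j < N \<Longrightarrow>
        distributed M lborel (\<lambda>\<omega>. W \<omega> (i, j)) (normal_density 0 (\<rho> / real N powr \<alpha>))"
    and k: "l1 + l2 = 2 * k" "k + 1 \<le> N"
  defines "s \<equiv> l1 + l2" and "\<delta> \<equiv> (if l1 = l2 then 1 else 0 :: real)"
  shows "\<rho> ^ s * (\<Prod>j\<in>{0..s div 2}. real N - real j) / real N powr (\<alpha> * real s) * \<delta>
      \<le> gen_moment_matrix M N W l1 l2"
    and "gen_moment_matrix M N W l1 l2
      \<le> \<rho> ^ s * real N powr (real s * (1/2 - \<alpha>) + 1) * \<delta>
        + \<rho> ^ s * gauss_moment s * (real s / 2) ^ s * real N powr (real s * (1/2 - \<alpha>))"
proof -
  let ?c = "\<rho> ^ s / real N powr (\<alpha> * real s)"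
  have N: "0 < real N" using \<open>1 \<le> N\<close> by simp
  have B: "gen_moment_matrix M N W l1 l2 = ?c * weight_sum N l1 l2"
    unfolding s_def by (rule gen_moment_matrix_gaussian[OF assms(1-5)])
  have c: "0 \<le> ?c" using \<open>0 < \<rho>\<close> by simp
  have scale: "?c * real N ^ j = \<rho> ^ s * real N powr (real j - \<alpha> * real s)" for j
    unfolding power_divide_powr[OF N, symmetric] by simp
  have "\<rho> ^ s * (\<Prod>j\<in>{0..s div 2}. real N - real j) / real N powr (\<alpha> * real s) * \<delta>
      = ?c * ((\<Prod>j\<in>{0..k}. real N - real j) * \<delta>)"
    using k(1) by (simp add: s_def)
  also have "\<dots> \<le> gen_moment_matrix M N W l1 l2"
    using mult_left_mono[OF weight_sum_bounds(1)[OF k] c] B by (simp add: \<delta>_def)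
  finally show "\<rho> ^ s * (\<Prod>j\<in>{0..s div 2}. real N - real j) / real N powr (\<alpha> * real s) * \<delta>
      \<le> gen_moment_matrix M N W l1 l2" .
  have "gen_moment_matrix M N W l1 l2
      \<le> ?c * (real N ^ (k + 1) * \<delta> + gauss_moment (2 * k) * real k ^ (2 * k) * real N ^ k)"
    using mult_left_mono[OF weight_sum_bounds(2)[OF k] c] B by (simp add: \<delta>_def)
  also have "\<dots> = (?c * real N ^ (k + 1)) * \<delta> + gauss_moment (2 * k) * real k ^ (2 * k) * (?c * real N ^ k)"
    by (simp add: algebra_simps)
  also have "\<dots> = \<rho> ^ s * real N powr (real (k + 1) - \<alpha> * real s) * \<delta>
      + gauss_moment (2 * k) * real k ^ (2 * k) * (\<rho> ^ s * real N powr (real k - \<alpha> * real s))"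
    by (simp only: scale)
  also have "\<dots> = \<rho> ^ s * real N powr (real s * (1/2 - \<alpha>) + 1) * \<delta>
      + \<rho> ^ s * gauss_moment s * (real s / 2) ^ s * real N powr (real s * (1/2 - \<alpha>))"
    using k(1) by (simp add: s_def algebra_simps)
  finally show "gen_moment_matrix M N W l1 l2
      \<le> \<rho> ^ s * real N powr (real s * (1/2 - \<alpha>) + 1) * \<delta>
        + \<rho> ^ s * gauss_moment s * (real s / 2) ^ s * real N powr (real s * (1/2 - \<alpha>))" .
qed

theorem mainTheorem11:
  fixes M :: "'a measure" and W :: "'a \<Rightarrow> nat \<times> nat \<Rightarrow> real"
    and N T l1 l2 :: nat and \<rho> \<alpha> :: real
  assumes "prob_space M"
    and "N \<ge> 1" and "T \<ge> 1" and "\<rho> > 0"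
    and "l1 \<le> T" and "l2 \<le> T"
    and indep: "prob_space.indep_vars M (\<lambda>_. borel) (\<lambda>ij \<omega>. W \<omega> ij) ({..<N} \<times> {..<N})"
    and gauss: "\<And>i j. i < N \<Longrightarrow> j < N \<Longrightarrow>
        distributed M lborel (\<lambda>\<omega>. W \<omega> (i, j)) (normal_density 0 (\<rho> / real N powr \<alpha>))"
  shows "(odd (l1 + l2) \<longrightarrow> gen_moment_matrix M N W l1 l2 = 0)
    \<and> (even (l1 + l2) \<and> (l1 + l2) div 2 + 1 \<le> N \<longrightarrow>
        (let s = l1 + l2; \<delta> = (if l1 = l2 then 1 else 0 :: real) in
          \<rho> ^ s * (\<Prod>k\<in>{0..s div 2}. real N - real k) / real N powr (\<alpha> * real s) * \<delta>
            \<le> gen_moment_matrix M N W l1 l2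
          \<and> gen_moment_matrix M N W l1 l2
            \<le> \<rho> ^ s * real N powr (real s * (1/2 - \<alpha>) + 1) * \<delta>
              + \<rho> ^ s * gauss_moment s * (real s / 2) ^ s * real N powr (real s * (1/2 - \<alpha>))))"
proof -
  have odd: "odd (l1 + l2) \<Longrightarrow> gen_moment_matrix M N W l1 l2 = 0"
    by (simp add: gen_moment_matrix_gaussian[OF assms(1,2,4) indep gauss] weight_sum_odd)
  have even: "even (l1 + l2) \<Longrightarrow> l1 + l2 = 2 * ((l1 + l2) div 2)"
    by simp
  show ?thesis
    unfolding Let_def using odd gen_moment_matrix_even_bounds[OF assms(1,2,4) indep gauss even]
    by blast
qed

end
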